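(* Let $x,y\in S_n$. Any directed path $\gamma$ from $x$ to $y$ in the Bruhat graph $\Gamma$ is contained in at most one hypercube (subgraph of $\Gamma$ isomorphic to some $\mathcal{H}_m$) whose bottom vertex is $x$ and whose top vertex is $y$.
   Context: $S_n$ is the symmetric group with length function $\ell$ (with respect to simple reflections $s_i=(i\ i{+}1)$) and $T$ its set of transpositions. The Bruhat graph $\Gamma$ is the directed graph on $S_n$ with an edge $w\to tw$ whenever $t\in T$ and $\ell(w)<\ell(tw)$. The hypercube graph $\mathcal{H}_m$ is the directed graph given by the Hasse diagram of the Boolean lattice of subsets of an $m$-element set (edges $A\to A\cup\{a\}$); an $m$-hypercube is a subgraph of $\Gamma$ isomorphic to $\mathcal{H}_m$, and its bottom and top vertices are the images of $\varnothing$ and of the full set. *)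

theory Defs
  imports "HOL-Combinatorics.Permutations" "HOL-Combinatorics.Transposition"
begin

definition Sym :: "nat \<Rightarrow> (nat \<Rightarrow> nat) set" where
  "Sym n = {w. w permutes {..<n}}"

definition simple_refl :: "nat \<Rightarrow> nat \<Rightarrow> nat" where
  "simple_refl i = transpose i (Suc i)"

definition len :: "nat \<Rightarrow> (nat \<Rightarrow> nat) \<Rightarrow> nat" where
  "len n w = (LEAST k. \<exists>is. length is = k \<and> (\<forall>i\<in>set is. Suc i < n) \<and>
                 w = foldr (\<lambda>i f. simple_refl i \<circ> f) is id)"

definition Transp :: "nat \<Rightarrow> (nat \<Rightarrow> nat) set" where
  "Transp n = {transpose i j | i j. i < j \<and> j < n}"

definition bruhat_edge :: "nat \<Rightarrow> (nat \<Rightarrow> nat) \<Rightarrow> (nat \<Rightarrow> nat) \<Rightarrow> bool" where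
  "bruhat_edge n w v \<longleftrightarrow> w \<in> Sym n \<and> (\<exists>t\<in>Transp n. v = t \<circ> w) \<and> len n w < len n v"

text \<open>A subgraph (V,E) of the Bruhat graph which is an m-hypercube, i.e. isomorphic
  to the Hasse diagram of the Boolean lattice of subsets of {0..<m}, with bottom x
  (image of the empty set) and top y (image of the full set).\<close>
definition hypercube_from_to ::
  "nat \<Rightarrow> nat \<Rightarrow> (nat \<Rightarrow> nat) set \<Rightarrow> ((nat \<Rightarrow> nat) \<times> (nat \<Rightarrow> nat)) set
     \<Rightarrow> (nat \<Rightarrow> nat) \<Rightarrow> (nat \<Rightarrow> nat) \<Rightarrow> bool" where
  "hypercube_from_to n m V E x y \<longleftrightarrow>
     V \<subseteq> Sym n \<and> E \<subseteq> V \<times> V \<and> (\<forall>(w,v)\<in>E. bruhat_edge n w v) \<and>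
     (\<exists>\<phi>. bij_betw \<phi> (Pow {..<m}) V \<and>
        (\<forall>A\<in>Pow {..<m}. \<forall>B\<in>Pow {..<m}.
            (\<phi> A, \<phi> B) \<in> E \<longleftrightarrow> (\<exists>a\<in>{..<m}. a \<notin> A \<and> B = insert a A)) \<and>
        \<phi> {} = x \<and> \<phi> {..<m} = y)"

definition bruhat_path :: "nat \<Rightarrow> (nat \<Rightarrow> nat) list \<Rightarrow> (nat \<Rightarrow> nat) \<Rightarrow> (nat \<Rightarrow> nat) \<Rightarrow> bool" where
  "bruhat_path n \<gamma> x y \<longleftrightarrow> \<gamma> \<noteq> [] \<and> hd \<gamma> = x \<and> last \<gamma> = y \<and>
     (\<forall>i. Suc i < length \<gamma> \<longrightarrow> bruhat_edge n (\<gamma> ! i) (\<gamma> ! Suc i))"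

definition path_in :: "(nat \<Rightarrow> nat) list \<Rightarrow> (nat \<Rightarrow> nat) set \<Rightarrow> ((nat \<Rightarrow> nat) \<times> (nat \<Rightarrow> nat)) set \<Rightarrow> bool" where
  "path_in \<gamma> V E \<longleftrightarrow> set \<gamma> \<subseteq> V \<and> (\<forall>i. Suc i < length \<gamma> \<longrightarrow> (\<gamma> ! i, \<gamma> ! Suc i) \<in> E)"

end

(*
  A directed path from the bottom to the top of a hypercube meets every rank once, so after
  relabelling the coordinates of the cube it runs through the images of the initial segments
  {..<k}.  Two hypercubes containing the path can therefore be parametrised so that they agree
  on all initial segments, and they then agree on every subset S: S is a middle vertex of a
  square of the cube whose other three vertices have fewer pairs out of order (an element of S
  above an element missing from S), and a two-step interval w -> v -> u of the Bruhat graph has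
  at most two middle vertices v.  For the latter, u w^-1 is a product of two transpositions:
  if they are disjoint there are only two such factorisations, and if it is a 3-cycle on
  p < q < r, an upward first step (p r) forces the relative positions of p, q, r in w to
  exclude one of the upward first steps (p q) and (q r).  Upward steps are recognised via
  length = number of inversions.
*)
theory Submission
  imports Defs
begin

section \<open>Length as the number of inversions\<close>

definition inversions :: "nat \<Rightarrow> (nat \<Rightarrow> nat) \<Rightarrow> (nat \<times> nat) set" where
  "inversions n f = {(a, b). a < b \<and> b < n \<and> f b < f a}"

lemma finite_inversions [simp]: "finite (inversions n f)"
  by (rule finite_subset[of _ "{..<n} \<times> {..<n}"]) (auto simp: inversions_def)

lemma inversions_id [simp]: "inversions n id = {}"
  by (auto simp: inversions_def)

lemma inj_on_swap_pair_if_ordered: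
  fixes s :: "nat \<Rightarrow> nat"
  assumes "\<And>x. s (s x) = x"
  shows "inj_on (\<lambda>(a, b). if s a < s b then (s a, s b) else (a, b)) {(a, b). a < b}"
proof (rule inj_onI, clarsimp)
  fix a b a' b' :: nat
  assume "a < b" "a' < b'"
    and "(if s a < s b then (s a, s b) else (a, b)) =
      (if s a' < s b' then (s a', s b') else (a', b'))"
  then show "a = a' \<and> b = b'"
    using assms by (cases "s a < s b"; cases "s a' < s b'") (metis Pair_inject)+
qed

lemma transpose_not_less_cases:
  fixes P Q a b :: nat
  assumes "P < Q" "a < b" "\<not> transpose P Q a < transpose P Q b"
  shows "(a = P \<and> b = Q) \<or> (a = P \<and> b < Q) \<or> (P < a \<and> b = Q)"
  using assms by (auto simp: transpose_def split: if_splits)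

lemma card_inversions_comp_transpose_less:
  assumes "P < Q" "Q < n" "w Q < w P"
  shows "card (inversions n (w \<circ> transpose P Q)) < card (inversions n w)"
proof -
  let ?s = "transpose P Q"
  define g where "g = (\<lambda>(a, b). if ?s a < ?s b then (?s a, ?s b) else (a :: nat, b :: nat))"
  have "inj_on g (inversions n (w \<circ> ?s))"
    by (rule inj_on_subset[OF inj_on_swap_pair_if_ordered[of ?s, folded g_def]])
      (auto simp: inversions_def)
  moreover have "g ` inversions n (w \<circ> ?s) \<subseteq> inversions n w - {(P, Q)}"
  proof (rule image_subsetI, clarify)
    fix a b assume "(a, b) \<in> inversions n (w \<circ> ?s)"
    then have ab: "a < b" "b < n" "w (?s b) < w (?s a)" by (auto simp: inversions_def)
    show "g (a, b) \<in> inversions n w - {(P, Q)}"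
    proof (cases "?s a < ?s b")
      case True
      have "?s b < n" using ab assms by (simp add: transpose_def)
      then show ?thesis
        using True ab assms by (auto simp: g_def inversions_def transpose_eq_iff)
    next
      case False
      then show ?thesis
        using transpose_not_less_cases[OF assms(1) ab(1) False] ab assms
        by (auto simp: g_def inversions_def)
    qed
  qed
  ultimately have "card (inversions n (w \<circ> ?s)) \<le> card (inversions n w - {(P, Q)})"
    by (metis card_image card_mono finite_Diff finite_inversions)
  also have "\<dots> < card (inversions n w)"
    using assms by (intro card_Diff1_less finite_inversions) (auto simp: inversions_def)
  finally show ?thesis .
qed

lemma simple_refl_less_iff:
  assumes "{x, y} \<noteq> {i, Suc i}"
  shows "simple_refl i x < simple_refl i y \<longleftrightarrow> x < y"
  using assms by (auto simp: simple_refl_def transpose_def)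

lemma card_inversions_simple_refl_comp_le:
  assumes f: "f permutes {..<n}"
  shows "card (inversions n (simple_refl i \<circ> f)) \<le> card (inversions n f) + 1"
proof -
  define P Q where "P = inv f i" and "Q = inv f (Suc i)"
  have "inversions n (simple_refl i \<circ> f) \<subseteq> insert (min P Q, max P Q) (inversions n f)"
  proof clarify
    fix a b
    assume "(a, b) \<in> inversions n (simple_refl i \<circ> f)" "(a, b) \<notin> inversions n f"
    then have "{f b, f a} = {i, Suc i}" "a < b"
      using simple_refl_less_iff[of "f b" "f a" i] by (auto simp: inversions_def)
    have "{a, b} = inv f ` {f b, f a}"
      using permutes_inverses(2)[OF f] by auto
    also have "\<dots> = {P, Q}"
      unfolding P_def Q_def \<open>{f b, f a} = {i, Suc i}\<close> by simp
    finally show "a = min P Q \<and> b = max P Q"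
      using \<open>a < b\<close> by (auto simp: doubleton_eq_iff)
  qed
  then have "card (inversions n (simple_refl i \<circ> f))
      \<le> card (insert (min P Q, max P Q) (inversions n f))"
    by (simp add: card_mono)
  also have "\<dots> \<le> card (inversions n f) + 1"
    by (simp add: card_insert_le_m1 card_insert_if)
  finally show ?thesis .
qed

abbreviation simple_refl_prod :: "nat list \<Rightarrow> nat \<Rightarrow> nat" where
  "simple_refl_prod is \<equiv> foldr (\<lambda>i f. simple_refl i \<circ> f) is id"

lemma simple_refl_prod_permutes:
  "\<forall>i\<in>set is. Suc i < n \<Longrightarrow> simple_refl_prod is permutes {..<n}"
  by (induction "is") (auto simp: simple_refl_def intro!: permutes_compose permutes_swap_id)

lemma card_inversions_simple_refl_prod_le:
  "\<forall>i\<in>set is. Suc i < n \<Longrightarrow> card (inversions n (simple_refl_prod is)) \<le> length is"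
proof (induction "is")
  case (Cons i "is")
  have "card (inversions n (simple_refl_prod is)) \<le> length is"
    using Cons.IH Cons.prems by (meson list.set_intros(2))
  moreover have "card (inversions n (simple_refl i \<circ> simple_refl_prod is))
      \<le> card (inversions n (simple_refl_prod is)) + 1"
    using Cons.prems by (intro card_inversions_simple_refl_comp_le simple_refl_prod_permutes) auto
  moreover have "simple_refl_prod (i # is) = simple_refl i \<circ> simple_refl_prod is"
    by simp
  ultimately show ?case
    by (simp only: length_Cons)
qed (simp add: id_def[symmetric])

lemma permutes_eq_id_if_increasing:
  assumes g: "g permutes {..<n}" and incr: "\<And>i. Suc i < n \<Longrightarrow> g i < g (Suc i)"
  shows "g = id"
proof -
  have "sorted_wrt (<) (map g [0..<n])"
    using incr by (subst sorted_wrt_iff_nth_Suc_transp) auto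
  then have "map g [0..<n] = [0..<n]"
    using permutes_image[OF g]
    by (intro sorted_distinct_set_unique) (auto simp: strict_sorted_iff lessThan_atLeast0)
  then have "g i = i" if "i < n" for i
    using that by (metis add_0 diff_zero length_upt nth_map nth_upt)
  then show ?thesis
    using permutes_not_in[OF g] by (auto simp: fun_eq_iff)
qed

lemma permutes_descent:
  assumes f: "f permutes {..<n}" and "f \<noteq> id"
  obtains i where "Suc i < n" "inv f (Suc i) < inv f i"
proof -
  have "inv f \<noteq> id"
    using \<open>f \<noteq> id\<close> permutes_inv_inv[OF f] by (metis inv_id)
  then have "\<not> (\<forall>i. Suc i < n \<longrightarrow> inv f i < inv f (Suc i))"
    using permutes_eq_id_if_increasing[OF permutes_inv[OF f]] by blast
  moreover have "inv f i \<noteq> inv f (Suc i)" for i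
    using permutes_inj[OF permutes_inv[OF f]] by (metis injD n_not_Suc_n)
  ultimately show ?thesis
    using that by (meson linorder_neqE_nat)
qed

lemma simple_refl_prod_exists:
  assumes "f permutes {..<n}"
  obtains "is" where "length is \<le> card (inversions n f)" "\<forall>i\<in>set is. Suc i < n"
    "f = simple_refl_prod is"
  using assms
proof (induction "card (inversions n f)" arbitrary: f thesis rule: less_induct)
  case less
  note f = less.prems(2)
  show ?case
  proof (cases "f = id")
    case True
    then show ?thesis using less.prems(1)[of "[]"] by simp
  next
    case False
    then obtain i where i: "Suc i < n" "inv f (Suc i) < inv f i"
      using permutes_descent[OF f] by blast
    let ?g = "simple_refl i \<circ> f"
    have g: "?g permutes {..<n}"
      unfolding simple_refl_def using i by (intro permutes_compose[OF f] permutes_swap_id) auto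
    have "?g = f \<circ> transpose (inv f (Suc i)) (inv f i)"
      unfolding simple_refl_def transpose_commute[of i]
      by (rule transpose_comp_eq) (rule permutes_bij[OF f])
    moreover have "f (inv f (Suc i)) = Suc i" "f (inv f i) = i" "inv f i < n"
      using permutes_inverses(1)[OF f] permutes_in_image[OF permutes_inv[OF f]] i(1) by auto
    ultimately have fewer: "card (inversions n ?g) < card (inversions n f)"
      using card_inversions_comp_transpose_less[of "inv f (Suc i)" "inv f i" n f] i by simp
    obtain "is" where "is": "length is \<le> card (inversions n ?g)" "\<forall>i\<in>set is. Suc i < n"
      "?g = simple_refl_prod is"
      using less.hyps[OF fewer _ g] by blast
    have "f = simple_refl i \<circ> ?g"
      by (simp add: simple_refl_def comp_assoc[symmetric])
    then show ?thesis
      using less.prems(1)[of "i # is"] "is" i fewer by auto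
  qed
qed

lemma len_eq_card_inversions:
  assumes "f \<in> Sym n"
  shows "len n f = card (inversions n f)"
proof -
  obtain "is" where "is": "length is \<le> card (inversions n f)" "\<forall>i\<in>set is. Suc i < n"
    "f = simple_refl_prod is"
    using simple_refl_prod_exists assms unfolding Sym_def by blast
  show ?thesis
    unfolding len_def
  proof (rule Least_equality)
    show "\<exists>is. length is = card (inversions n f) \<and> (\<forall>i\<in>set is. Suc i < n) \<and> f = simple_refl_prod is"
      using "is" card_inversions_simple_refl_prod_le[OF "is"(2)] by (intro exI[of _ "is"]) auto
    show "card (inversions n f) \<le> k"
      if "\<exists>is. length is = k \<and> (\<forall>i\<in>set is. Suc i < n) \<and> f = simple_refl_prod is" for k
      using that card_inversions_simple_refl_prod_le by auto
  qed
qed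

lemma bruhat_edgeE:
  assumes "bruhat_edge n w v"
  obtains i j where "i < j" "j < n" "v = transpose i j \<circ> w" "w \<in> Sym n" "len n w < len n v"
  using assms unfolding bruhat_edge_def Transp_def by blast

lemma transpose_comp_Sym: "w \<in> Sym n \<Longrightarrow> i < n \<Longrightarrow> j < n \<Longrightarrow> transpose i j \<circ> w \<in> Sym n"
  unfolding Sym_def by (auto intro!: permutes_compose permutes_swap_id)

(* (i j) \<circ> w swaps the values i and j of w, which lowers the number of inversions if j
   stands before i. *)
lemma inv_less_if_len_less_transpose_comp:
  assumes w: "w \<in> Sym n" and "i < j" "j < n"
    and up: "len n w < len n (transpose i j \<circ> w)"
  shows "inv w i < inv w j"
proof (rule ccontr)
  have wp: "w permutes {..<n}" using w by (simp add: Sym_def)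
  assume "\<not> inv w i < inv w j"
  moreover have "inv w i \<noteq> inv w j"
    using \<open>i < j\<close> permutes_inverses(1)[OF wp] by (metis less_irrefl)
  ultimately have "inv w j < inv w i" by simp
  moreover have "transpose i j \<circ> w = w \<circ> transpose (inv w j) (inv w i)"
    unfolding transpose_commute[of i] by (rule transpose_comp_eq) (rule permutes_bij[OF wp])
  moreover have "w (inv w j) = j" "w (inv w i) = i" "inv w i < n"
    using permutes_inverses(1)[OF wp] permutes_in_image[OF permutes_inv[OF wp]] assms by auto
  ultimately have "card (inversions n (transpose i j \<circ> w)) < card (inversions n w)"
    using card_inversions_comp_transpose_less[of "inv w j" "inv w i" n w] \<open>i < j\<close> by simp
  then show False
    using up w assms by (simp add: len_eq_card_inversions transpose_comp_Sym)
qed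

section \<open>Two-step paths in the Bruhat graph\<close>

lemma transpose_comp_transpose_moved:
  fixes a b e f :: nat
  assumes "a < b" "e < f" "(e, f) \<noteq> (a, b)"
  shows "{z. (transpose e f \<circ> transpose a b) z \<noteq> z} = {a, b, e, f}"
  using assms by (auto simp: transpose_def split: if_splits)

lemma card_three_nat_sorted:
  fixes S :: "nat set"
  assumes "card S = 3"
  obtains p q r where "p < q" "q < r" "S = {p, q, r}"
proof -
  obtain x y z where "S = {x, y, z}" "x \<noteq> y" "x \<noteq> z" "y \<noteq> z"
    using assms unfolding card_3_iff by blast
  then show ?thesis
    using that by (metis insert_commute linorder_neqE_nat)
qed

lemma card_overlapping_pairs:
  fixes a b e f :: nat
  assumes "a < b" "e < f" "(e, f) \<noteq> (a, b)" "\<not> (a \<noteq> e \<and> a \<noteq> f \<and> b \<noteq> e \<and> b \<noteq> f)"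
  shows "card {a, b, e, f} = 3"
  using assms by (auto simp: card_insert_if)

(* For pos = inv w, the positions of the values in w, these are the first steps (a b) of the
   upward two-step paths w -> (a b) w -> c w of the Bruhat graph. *)
definition upward_first_factors :: "(nat \<Rightarrow> nat) \<Rightarrow> (nat \<Rightarrow> nat) \<Rightarrow> (nat \<times> nat) set" where
  "upward_first_factors pos c = {(a, b). a < b \<and> pos a < pos b \<and>
     (\<exists>e f. e < f \<and> c = transpose e f \<circ> transpose a b \<and>
        pos (transpose a b e) < pos (transpose a b f))}"

lemma upward_first_factorsE:
  assumes "(a, b) \<in> upward_first_factors pos c" "c \<noteq> id"
  obtains e f where "a < b" "e < f" "(e, f) \<noteq> (a, b)" "pos a < pos b"
    "c = transpose e f \<circ> transpose a b" "pos (transpose a b e) < pos (transpose a b f)"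
    "{z. c z \<noteq> z} = {a, b, e, f}"
proof -
  obtain e f where ef: "a < b" "e < f" "pos a < pos b" "c = transpose e f \<circ> transpose a b"
    "pos (transpose a b e) < pos (transpose a b f)"
    using assms(1) unfolding upward_first_factors_def by blast
  moreover have "(e, f) \<noteq> (a, b)"
    using ef(4) \<open>c \<noteq> id\<close> by auto
  ultimately show ?thesis
    using that transpose_comp_transpose_moved by blast
qed

lemma upward_first_factors_disjoint:
  assumes c: "c = transpose e f \<circ> transpose a b" and "a < b" "e < f"
    and disj: "a \<noteq> e" "a \<noteq> f" "b \<noteq> e" "b \<noteq> f"
  shows "upward_first_factors pos c \<subseteq> {(a, b), (e, f)}"
proof (rule subrelI)
  fix a' b' assume ab': "(a', b') \<in> upward_first_factors pos c"
  have "c a = b" "c b = a" "c e = f" "c f = e"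
    using c disj by auto
  then have "c \<noteq> id" using \<open>a < b\<close> by auto
  then obtain e' f' where ef': "a' < b'" "e' < f'" "(e', f') \<noteq> (a', b')" "pos a' < pos b'"
    "c = transpose e' f' \<circ> transpose a' b'" "pos (transpose a' b' e') < pos (transpose a' b' f')"
    "{z. c z \<noteq> z} = {a', b', e', f'}"
    by (rule upward_first_factorsE[OF ab'])
  moreover have moved: "{z. c z \<noteq> z} = {a, b, e, f}"
    using transpose_comp_transpose_moved[of a b e f] assms by auto
  moreover have "card {a, b, e, f} = 4"
    using assms by auto
  ultimately have "a' \<noteq> e' \<and> a' \<noteq> f' \<and> b' \<noteq> e' \<and> b' \<noteq> f'"
    using card_overlapping_pairs[of a' b' e' f'] by auto
  then have "c a' = b'"
    using ef'(5) by auto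
  moreover have "a' \<in> {a, b, e, f}"
    using moved ef'(7) by blast
  ultimately show "(a', b') \<in> {(a, b), (e, f)}"
    using \<open>c a = b\<close> \<open>c b = a\<close> \<open>c e = f\<close> \<open>c f = e\<close> \<open>a' < b'\<close> \<open>a < b\<close> \<open>e < f\<close> by auto
qed

lemma ordered_pair_in_three:
  fixes a b p q r :: nat
  assumes "a \<in> {p, q, r}" "b \<in> {p, q, r}" "a < b" "p < q" "q < r"
  shows "(a, b) \<in> {(p, q), (p, r), (q, r)}"
  using assms by auto

lemma upward_first_factors_three_cycle:
  assumes moved: "{z. c z \<noteq> z} = {p, q, r}" and "p < q" "q < r"
  shows "\<exists>X Y. upward_first_factors pos c \<subseteq> {X, Y}"
proof -
  have "c \<noteq> id" using moved by auto
  have pairs: "(a, b) \<in> {(p, q), (p, r), (q, r)} \<and> (e, f) \<in> {(p, q), (p, r), (q, r)}"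
    if "a < b" "e < f" "{z. c z \<noteq> z} = {a, b, e, f}" for a b e f
  proof -
    have "{a, b, e, f} = {p, q, r}" using that moved by simp
    then have "a \<in> {p, q, r}" "b \<in> {p, q, r}" "e \<in> {p, q, r}" "f \<in> {p, q, r}" by blast+
    then show ?thesis
      using ordered_pair_in_three that \<open>p < q\<close> \<open>q < r\<close> by blast
  qed
  have sub: "upward_first_factors pos c \<subseteq> {(p, q), (p, r), (q, r)}"
  proof (rule subrelI)
    fix a b assume "(a, b) \<in> upward_first_factors pos c"
    then obtain e f where "a < b" "e < f" "(e, f) \<noteq> (a, b)" "pos a < pos b"
      "c = transpose e f \<circ> transpose a b" "pos (transpose a b e) < pos (transpose a b f)"
      "{z. c z \<noteq> z} = {a, b, e, f}"
      by (rule upward_first_factorsE[OF _ \<open>c \<noteq> id\<close>])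
    then show "(a, b) \<in> {(p, q), (p, r), (q, r)}"
      using pairs[of a b e f] by simp
  qed
  show ?thesis
  proof (cases "(p, r) \<in> upward_first_factors pos c")
    case False
    then show ?thesis using sub by blast
  next
    case True
    then obtain e f where ef: "p < r" "e < f" "(e, f) \<noteq> (p, r)" "pos p < pos r"
      "c = transpose e f \<circ> transpose p r"
      "pos (transpose p r e) < pos (transpose p r f)" "{z. c z \<noteq> z} = {p, r, e, f}"
      by (rule upward_first_factorsE[OF _ \<open>c \<noteq> id\<close>])
    then consider "(e, f) = (p, q)" | "(e, f) = (q, r)"
      using pairs[of p r e f] \<open>p < q\<close> \<open>q < r\<close> by blast
    then show ?thesis
    proof cases
      case 1
      then have "pos r < pos q" using ef(6) \<open>p < q\<close> \<open>q < r\<close> by simp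
      then have "(q, r) \<notin> upward_first_factors pos c"
        by (auto simp: upward_first_factors_def)
      then show ?thesis using sub by blast
    next
      case 2
      then have "pos q < pos p" using ef(6) \<open>p < q\<close> \<open>q < r\<close> by simp
      then have "(p, q) \<notin> upward_first_factors pos c"
        by (auto simp: upward_first_factors_def)
      then show ?thesis using sub by blast
    qed
  qed
qed

lemma upward_first_factors_subset_doubleton:
  assumes "c \<noteq> id"
  shows "\<exists>X Y. upward_first_factors pos c \<subseteq> {X, Y}"
proof (cases "upward_first_factors pos c = {}")
  case False
  then obtain a b where "(a, b) \<in> upward_first_factors pos c" by auto
  then obtain e f where ef: "a < b" "e < f" "(e, f) \<noteq> (a, b)" "pos a < pos b"
    "c = transpose e f \<circ> transpose a b" "pos (transpose a b e) < pos (transpose a b f)"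
    "{z. c z \<noteq> z} = {a, b, e, f}"
    by (rule upward_first_factorsE[OF _ assms])
  show ?thesis
  proof (cases "a \<noteq> e \<and> a \<noteq> f \<and> b \<noteq> e \<and> b \<noteq> f")
    case True
    then show ?thesis using upward_first_factors_disjoint[OF ef(5,1,2)] by blast
  next
    case False
    obtain p q r where pqr: "p < q" "q < r" "{a, b, e, f} = {p, q, r}"
      by (rule card_three_nat_sorted[OF card_overlapping_pairs[OF ef(1-3) False]])
    then have "{z. c z \<noteq> z} = {p, q, r}" using ef(7) by simp
    then show ?thesis using upward_first_factors_three_cycle pqr(1,2) by blast
  qed
qed simp

definition bruhat_middles :: "nat \<Rightarrow> (nat \<Rightarrow> nat) \<Rightarrow> (nat \<Rightarrow> nat) \<Rightarrow> (nat \<Rightarrow> nat) set" where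
  "bruhat_middles n w u = {v. bruhat_edge n w v \<and> bruhat_edge n v u}"

lemma bruhat_middle_upward_first_factor:
  assumes "v \<in> bruhat_middles n w u"
  obtains a b where "v = transpose a b \<circ> w" "(a, b) \<in> upward_first_factors (inv w) (u \<circ> inv w)"
proof -
  have wv: "bruhat_edge n w v" and vu: "bruhat_edge n v u"
    using assms by (auto simp: bruhat_middles_def)
  obtain a b where ab: "a < b" "b < n" "v = transpose a b \<circ> w" "w \<in> Sym n" "len n w < len n v"
    using wv by (rule bruhat_edgeE)
  obtain e f where ef: "e < f" "f < n" "u = transpose e f \<circ> v" "v \<in> Sym n" "len n v < len n u"
    using vu by (rule bruhat_edgeE)
  have w: "w permutes {..<n}" using ab(4) by (simp add: Sym_def)
  have "inv v = inv w \<circ> transpose a b"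
    unfolding ab(3) by (simp add: o_inv_distrib permutes_bij[OF w])
  moreover have "inv v e < inv v f"
    using inv_less_if_len_less_transpose_comp[OF ef(4,1,2)] ef(3,5) by simp
  moreover have "inv w a < inv w b"
    using inv_less_if_len_less_transpose_comp[OF ab(4,1,2)] ab(3,5) by simp
  moreover have "u \<circ> inv w = transpose e f \<circ> transpose a b"
    unfolding ef(3) ab(3) by (simp add: comp_assoc permutes_inv_o(1)[OF w])
  ultimately have "(a, b) \<in> upward_first_factors (inv w) (u \<circ> inv w)"
    using ab(1) ef(1) unfolding upward_first_factors_def by auto
  then show ?thesis using that ab(3) by blast
qed

lemma bruhat_middles_subset_doubleton: "\<exists>v1 v2. bruhat_middles n w u \<subseteq> {v1, v2}"
proof (cases "bruhat_middles n w u = {}")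
  case False
  then obtain v where "bruhat_edge n w v" "bruhat_edge n v u"
    by (auto simp: bruhat_middles_def)
  then have "w \<in> Sym n" "len n w < len n u"
    by (auto elim!: bruhat_edgeE)
  moreover have "u = (u \<circ> inv w) \<circ> w"
    using \<open>w \<in> Sym n\<close> by (simp add: Sym_def comp_assoc permutes_inv_o(2))
  ultimately have "u \<circ> inv w \<noteq> id"
    by auto
  then obtain X Y where XY: "upward_first_factors (inv w) (u \<circ> inv w) \<subseteq> {X, Y}"
    using upward_first_factors_subset_doubleton by blast
  have "bruhat_middles n w u \<subseteq> (\<lambda>(a, b). transpose a b \<circ> w) ` {X, Y}"
  proof
    fix v assume "v \<in> bruhat_middles n w u"
    then obtain a b where
      "v = transpose a b \<circ> w" "(a, b) \<in> upward_first_factors (inv w) (u \<circ> inv w)"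
      by (rule bruhat_middle_upward_first_factor)
    then show "v \<in> (\<lambda>(a, b). transpose a b \<circ> w) ` {X, Y}"
      using XY by force
  qed
  then show ?thesis by auto
qed simp

section \<open>Subsets of an initial segment\<close>

lemma bij_betw_image_insert_iff:
  assumes \<pi>: "bij_betw \<pi> {..<m} {..<m}" and A: "A \<subseteq> {..<m}" and B: "B \<subseteq> {..<m}"
  shows "(\<exists>a\<in>{..<m}. a \<notin> \<pi> ` A \<and> \<pi> ` B = insert a (\<pi> ` A)) \<longleftrightarrow>
    (\<exists>a\<in>{..<m}. a \<notin> A \<and> B = insert a A)"
proof
  have inj: "inj_on \<pi> {..<m}" and im: "\<pi> ` {..<m} = {..<m}"
    using \<pi> by (auto simp: bij_betw_def)
  {
    assume "\<exists>a\<in>{..<m}. a \<notin> \<pi> ` A \<and> \<pi> ` B = insert a (\<pi> ` A)"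
    then obtain a where a: "a < m" "a \<notin> \<pi> ` A" "\<pi> ` B = insert a (\<pi> ` A)" by blast
    then have "a \<in> \<pi> ` {..<m}" using im by simp
    then obtain a' where a': "a' < m" "a = \<pi> a'" by blast
    then have "a' \<notin> A" and eq: "\<pi> ` B = \<pi> ` insert a' A" and sub: "insert a' A \<subseteq> {..<m}"
      using a A by auto
    moreover have "B = insert a' A"
      using inj_on_image_eq_iff[OF inj B sub] eq by blast
    ultimately show "\<exists>a\<in>{..<m}. a \<notin> A \<and> B = insert a A"
      using \<open>a' < m\<close> by blast
  next
    assume "\<exists>a\<in>{..<m}. a \<notin> A \<and> B = insert a A"
    then obtain a where a: "a < m" "a \<notin> A" "B = insert a A" by blast
    then have "\<pi> a \<notin> \<pi> ` A" "\<pi> a < m"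
      using inj_on_image_mem_iff[OF inj _ A] im by auto
    then show "\<exists>a\<in>{..<m}. a \<notin> \<pi> ` A \<and> \<pi> ` B = insert a (\<pi> ` A)"
      using a(3) by blast
  }
qed

lemma insertion_chain_card:
  assumes "B 0 = {}" "\<And>i. i < k \<Longrightarrow> \<exists>a. a \<notin> B i \<and> B (Suc i) = insert a (B i)"
  shows "finite (B k) \<and> card (B k) = k"
  using assms(2)
proof (induction k)
  case (Suc k)
  then obtain a where "a \<notin> B k" "B (Suc k) = insert a (B k)" by blast
  then show ?case using Suc by simp
qed (simp add: assms(1))

lemma saturated_chain_enumeration:
  assumes "B 0 = {}" "B m = {..<m}"
    and step: "\<And>i. i < m \<Longrightarrow> \<exists>a. a \<notin> B i \<and> B (Suc i) = insert a (B i)"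
  obtains \<pi> where "bij_betw \<pi> {..<m} {..<m}" "\<forall>i\<le>m. B i = \<pi> ` {..<i}"
proof -
  define \<pi> where "\<pi> i = the_elem (B (Suc i) - B i)" for i
  have \<pi>: "\<pi> i \<notin> B i \<and> B (Suc i) = insert (\<pi> i) (B i)" if i: "i < m" for i
  proof -
    obtain a where "a \<notin> B i" "B (Suc i) = insert a (B i)"
      using step[OF i] by blast
    moreover from this have "\<pi> i = a"
      unfolding \<pi>_def by (simp add: insert_Diff_if)
    ultimately show ?thesis by simp
  qed
  have B: "B i = \<pi> ` {..<i}" if "i \<le> m" for i
    using that
  proof (induction i)
    case (Suc i)
    then show ?case using \<pi>[of i] by (simp add: lessThan_Suc)
  qed (simp add: assms(1))
  have "\<pi> ` {..<m} = {..<m}"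
    using B[of m] assms(2) by simp
  moreover from this have "inj_on \<pi> {..<m}"
    by (intro eq_card_imp_inj_on) simp_all
  ultimately show ?thesis
    using that B by (simp add: bij_betw_def)
qed

definition misplaced_pairs :: "nat \<Rightarrow> nat set \<Rightarrow> (nat \<times> nat) set" where
  "misplaced_pairs m S = {(s, c). s \<in> S \<and> c \<in> {..<m} - S \<and> c < s}"

lemma finite_misplaced_pairs: "S \<subseteq> {..<m} \<Longrightarrow> finite (misplaced_pairs m S)"
  by (rule finite_subset[of _ "{..<m} \<times> {..<m}"]) (auto simp: misplaced_pairs_def)

lemma misplaced_pairs_empty_imp_initial_segment:
  assumes "S \<subseteq> {..<m}" "misplaced_pairs m S = {}"
  obtains k where "k \<le> m" "S = {..<k}"
proof -
  have down: "c \<in> S" if "s \<in> S" "c < s" for s c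
  proof -
    have "c < m" using assms(1) that by auto
    then show ?thesis using assms(2) that by (auto simp: misplaced_pairs_def)
  qed
  define k where "k = (LEAST k. k \<notin> S)"
  have "m \<notin> S" using assms(1) by auto
  then have "k \<le> m" "k \<notin> S"
    unfolding k_def by (rule Least_le, rule LeastI)
  moreover have "S = {..<k}"
  proof
    show "S \<subseteq> {..<k}"
      using down \<open>k \<notin> S\<close> by (metis lessThan_iff linorder_neqE_nat subsetI)
    show "{..<k} \<subseteq> S"
      using not_less_Least unfolding k_def by auto
  qed
  ultimately show ?thesis using that by blast
qed

lemma misplaced_pairs_remove_max:
  assumes "\<And>s. s \<in> S \<Longrightarrow> s \<le> b"
  shows "misplaced_pairs m (S - {b}) \<subseteq> misplaced_pairs m S"
  using assms by (fastforce simp: misplaced_pairs_def)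

lemma misplaced_pairs_insert_min:
  assumes "\<And>c. c < m \<Longrightarrow> c \<notin> S \<Longrightarrow> a \<le> c"
  shows "misplaced_pairs m (insert a S) \<subseteq> misplaced_pairs m S"
  using assms by (fastforce simp: misplaced_pairs_def)

lemma misplaced_pairs_square:
  assumes S: "S \<subseteq> {..<m}" and "misplaced_pairs m S \<noteq> {}"
  obtains a b T where "S = insert b T" "b \<notin> T" "a < m" "b < m" "a \<notin> S"
    "misplaced_pairs m T \<subset> misplaced_pairs m S"
    "misplaced_pairs m (insert a T) \<subset> misplaced_pairs m S"
    "misplaced_pairs m (insert a S) \<subset> misplaced_pairs m S"
proof -
  obtain s0 c0 where sc: "s0 \<in> S" "c0 < m" "c0 \<notin> S" "c0 < s0"
    using assms(2) by (auto simp: misplaced_pairs_def)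
  have fin: "finite S" using S finite_subset by blast
  define b where "b = Max S"
  define a where "a = Min ({..<m} - S)"
  have b: "b \<in> S" "\<And>s. s \<in> S \<Longrightarrow> s \<le> b"
    using Max_in[OF fin] Max_ge[OF fin] sc(1) unfolding b_def by blast+
  have a: "a < m" "a \<notin> S" "\<And>c. c < m \<Longrightarrow> c \<notin> S \<Longrightarrow> a \<le> c"
    using Min_in[of "{..<m} - S"] Min_le[of "{..<m} - S"] sc(2,3) unfolding a_def by auto
  have "a < b" using a(3)[OF sc(2,3)] sc(4) b(2)[OF sc(1)] by linarith
  define T where "T = S - {b}"
  have ba: "(b, a) \<in> misplaced_pairs m S" "(b, a) \<notin> misplaced_pairs m T"
    "(b, a) \<notin> misplaced_pairs m (insert a T)" "(b, a) \<notin> misplaced_pairs m (insert a S)"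
    using a b \<open>a < b\<close> by (auto simp: misplaced_pairs_def T_def)
  have "a \<le> c" if "c < m" "c \<notin> T" for c
    using a(3)[OF that(1)] that \<open>a < b\<close> unfolding T_def by fastforce
  then have "misplaced_pairs m (insert a T) \<subseteq> misplaced_pairs m T"
    by (rule misplaced_pairs_insert_min)
  moreover have "misplaced_pairs m T \<subseteq> misplaced_pairs m S"
    unfolding T_def using b(2) by (rule misplaced_pairs_remove_max)
  moreover have "misplaced_pairs m (insert a S) \<subseteq> misplaced_pairs m S"
    using a(3) by (rule misplaced_pairs_insert_min)
  moreover have "S = insert b T" "b \<notin> T" "b < m"
    using b S unfolding T_def by auto
  ultimately show ?thesis
    using that a(1,2) ba by blast
qed

section \<open>Hypercubes in the Bruhat graph\<close>

definition bruhat_cube ::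
  "nat \<Rightarrow> nat \<Rightarrow> (nat \<Rightarrow> nat) set \<Rightarrow> ((nat \<Rightarrow> nat) \<times> (nat \<Rightarrow> nat)) set \<Rightarrow> (nat set \<Rightarrow> nat \<Rightarrow> nat) \<Rightarrow> bool"
where
  "bruhat_cube n m V E \<psi> \<longleftrightarrow> bij_betw \<psi> (Pow {..<m}) V \<and>
     (\<forall>A\<in>Pow {..<m}. \<forall>B\<in>Pow {..<m}. (\<psi> A, \<psi> B) \<in> E \<longleftrightarrow> (\<exists>a\<in>{..<m}. a \<notin> A \<and> B = insert a A)) \<and>
     E \<subseteq> V \<times> V \<and> (\<forall>(w, v)\<in>E. bruhat_edge n w v)"

lemma hypercube_from_toE:
  assumes "hypercube_from_to n m V E x y"
  obtains \<psi> where "bruhat_cube n m V E \<psi>" "\<psi> {} = x" "\<psi> {..<m} = y"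
  using assms unfolding hypercube_from_to_def bruhat_cube_def by blast

lemma bruhat_cube_edge:
  assumes "bruhat_cube n m V E \<psi>" "A \<subseteq> {..<m}" "a < m" "a \<notin> A"
  shows "bruhat_edge n (\<psi> A) (\<psi> (insert a A))"
  using assms unfolding bruhat_cube_def by blast

lemma bruhat_cube_inj_on: "bruhat_cube n m V E \<psi> \<Longrightarrow> inj_on \<psi> (Pow {..<m})"
  unfolding bruhat_cube_def bij_betw_def by blast

lemma bruhat_cube_middle:
  assumes "bruhat_cube n m V E \<psi>" "A \<subseteq> {..<m}" "a < m" "b < m" "a \<notin> A" "b \<notin> A" "a \<noteq> b"
  shows "\<psi> (insert a A) \<in> bruhat_middles n (\<psi> A) (\<psi> (insert a (insert b A)))"
  using bruhat_cube_edge[OF assms(1), of A a] bruhat_cube_edge[OF assms(1), of "insert a A" b] assms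
  by (simp add: bruhat_middles_def insert_commute)

lemma bruhat_cube_edges:
  assumes "bruhat_cube n m V E \<psi>"
  shows "E = (\<lambda>(A, a). (\<psi> A, \<psi> (insert a A))) ` {(A, a). A \<subseteq> {..<m} \<and> a < m \<and> a \<notin> A}"
    (is "E = ?H")
proof
  have V: "V = \<psi> ` Pow {..<m}" and EV: "E \<subseteq> V \<times> V"
    and iff: "\<And>A B. A \<subseteq> {..<m} \<Longrightarrow> B \<subseteq> {..<m} \<Longrightarrow>
        (\<psi> A, \<psi> B) \<in> E \<longleftrightarrow> (\<exists>a\<in>{..<m}. a \<notin> A \<and> B = insert a A)"
    using assms unfolding bruhat_cube_def bij_betw_def by auto
  show "E \<subseteq> ?H"
  proof
    fix z assume "z \<in> E"
    then obtain A B where AB: "z = (\<psi> A, \<psi> B)" "A \<subseteq> {..<m}" "B \<subseteq> {..<m}"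
      using EV V by blast
    with \<open>z \<in> E\<close> obtain a where "a < m" "a \<notin> A" "B = insert a A"
      using iff by blast
    then show "z \<in> ?H" using AB by force
  qed
  show "?H \<subseteq> E"
    using iff by auto
qed

lemma bruhat_cube_determined_by_param:
  assumes "bruhat_cube n m V1 E1 \<psi>1" "bruhat_cube n m V2 E2 \<psi>2"
    and "\<And>S. S \<subseteq> {..<m} \<Longrightarrow> \<psi>1 S = \<psi>2 S"
  shows "V1 = V2 \<and> E1 = E2"
proof
  show "V1 = V2"
    using assms unfolding bruhat_cube_def bij_betw_def by (metis PowD image_cong)
  show "E1 = E2"
    unfolding bruhat_cube_edges[OF assms(1)] bruhat_cube_edges[OF assms(2)]
    using assms(3) by (intro image_cong) auto
qed

lemma bruhat_cube_relabel:
  assumes cube: "bruhat_cube n m V E \<phi>" and \<pi>: "bij_betw \<pi> {..<m} {..<m}"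
  shows "bruhat_cube n m V E (\<lambda>S. \<phi> (\<pi> ` S))"
proof -
  have bij: "bij_betw \<phi> (Pow {..<m}) V" and edges: "E \<subseteq> V \<times> V" "\<forall>(w, v)\<in>E. bruhat_edge n w v"
    and iff: "\<And>A B. A \<in> Pow {..<m} \<Longrightarrow> B \<in> Pow {..<m} \<Longrightarrow>
      (\<phi> A, \<phi> B) \<in> E \<longleftrightarrow> (\<exists>a\<in>{..<m}. a \<notin> A \<and> B = insert a A)"
    using cube by (simp_all add: bruhat_cube_def)
  from bij_betw_trans[OF bij_betw_image_Pow[OF \<pi>] bij]
  have "bij_betw (\<lambda>S. \<phi> (\<pi> ` S)) (Pow {..<m}) V"
    by (simp add: comp_def)
  moreover have "(\<phi> (\<pi> ` A), \<phi> (\<pi> ` B)) \<in> E \<longleftrightarrow> (\<exists>a\<in>{..<m}. a \<notin> A \<and> B = insert a A)"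
    if "A \<in> Pow {..<m}" "B \<in> Pow {..<m}" for A B
  proof -
    have "\<pi> ` A \<in> Pow {..<m}" "\<pi> ` B \<in> Pow {..<m}"
      using that \<pi> by (auto simp: bij_betw_def)
    then have "(\<phi> (\<pi> ` A), \<phi> (\<pi> ` B)) \<in> E \<longleftrightarrow>
        (\<exists>a\<in>{..<m}. a \<notin> \<pi> ` A \<and> \<pi> ` B = insert a (\<pi> ` A))"
      by (rule iff)
    also have "\<dots> \<longleftrightarrow> (\<exists>a\<in>{..<m}. a \<notin> A \<and> B = insert a A)"
      using bij_betw_image_insert_iff[OF \<pi>] that by blast
    finally show ?thesis .
  qed
  ultimately show ?thesis
    unfolding bruhat_cube_def using edges by blast
qed

lemma bruhat_cube_eq_if_eq_on_initial_segments:
  assumes c1: "bruhat_cube n m V1 E1 \<psi>1" and c2: "bruhat_cube n m V2 E2 \<psi>2"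
    and init: "\<And>k. k \<le> m \<Longrightarrow> \<psi>1 {..<k} = \<psi>2 {..<k}"
  shows "S \<subseteq> {..<m} \<Longrightarrow> \<psi>1 S = \<psi>2 S"
proof (induction "card (misplaced_pairs m S)" arbitrary: S rule: less_induct)
  case less
  show ?case
  proof (cases "misplaced_pairs m S = {}")
    case True
    then obtain k where "k \<le> m" "S = {..<k}"
      by (rule misplaced_pairs_empty_imp_initial_segment[OF less.prems])
    then show ?thesis using init by simp
  next
    case False
    then obtain a b T where sq: "S = insert b T" "b \<notin> T" "a < m" "b < m" "a \<notin> S"
      "misplaced_pairs m T \<subset> misplaced_pairs m S"
      "misplaced_pairs m (insert a T) \<subset> misplaced_pairs m S"
      "misplaced_pairs m (insert a S) \<subset> misplaced_pairs m S"
      by (rule misplaced_pairs_square[OF less.prems])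
    have T: "T \<subseteq> {..<m}" "a \<notin> T" "b \<noteq> a" and aS: "insert a S \<subseteq> {..<m}"
      using less.prems sq by auto
    have middles:
      "\<psi> S \<in> bruhat_middles n (\<psi> T) (\<psi> (insert a S))"
      "\<psi> (insert a T) \<in> bruhat_middles n (\<psi> T) (\<psi> (insert a S))"
      "\<psi> S \<noteq> \<psi> (insert a T)"
      if cube: "bruhat_cube n m V E \<psi>" for V E \<psi>
    proof -
      have ba: "insert b (insert a T) = insert a S" and ab: "insert a (insert b T) = insert a S"
        using sq(1) by auto
      show "\<psi> S \<in> bruhat_middles n (\<psi> T) (\<psi> (insert a S))"
        using bruhat_cube_middle[OF cube T(1) sq(4,3,2) T(2,3)] unfolding ba sq(1)[symmetric] .
      show "\<psi> (insert a T) \<in> bruhat_middles n (\<psi> T) (\<psi> (insert a S))"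
        using bruhat_cube_middle[OF cube T(1) sq(3,4) T(2) sq(2) T(3)[symmetric]] unfolding ab .
      have "S \<noteq> insert a T" "insert a T \<subseteq> {..<m}"
        using sq(5) aS sq(1) by auto
      then show "\<psi> S \<noteq> \<psi> (insert a T)"
        using inj_onD[OF bruhat_cube_inj_on[OF cube]] less.prems by blast
    qed
    have IH: "\<psi>1 R = \<psi>2 R" if "misplaced_pairs m R \<subset> misplaced_pairs m S" "R \<subseteq> {..<m}" for R
      using less.hyps[OF psubset_card_mono[OF finite_misplaced_pairs[OF less.prems] that(1)]]
        that(2) .
    have "\<psi>2 S \<in> bruhat_middles n (\<psi>1 T) (\<psi>1 (insert a S))"
      using middles(1)[OF c2] IH[OF sq(6) T(1)] IH[OF sq(8) aS] by simp
    moreover have "\<psi>2 S \<noteq> \<psi>1 (insert a T)"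
      using middles(3)[OF c2] IH[OF sq(7)] T(1) sq(3) by simp
    moreover obtain v1 v2 where "bruhat_middles n (\<psi>1 T) (\<psi>1 (insert a S)) \<subseteq> {v1, v2}"
      using bruhat_middles_subset_doubleton by blast
    ultimately show ?thesis
      using middles[OF c1] by blast
  qed
qed

lemma bruhat_cube_path_preimages:
  assumes cube: "bruhat_cube n m V E \<phi>" and path: "path_in \<gamma> V E"
  obtains B where "\<forall>i<length \<gamma>. B i \<subseteq> {..<m} \<and> \<phi> (B i) = \<gamma> ! i"
    "\<forall>i. Suc i < length \<gamma> \<longrightarrow> (\<exists>a. a \<notin> B i \<and> B (Suc i) = insert a (B i))"
proof -
  define B where "B i = inv_into (Pow {..<m}) \<phi> (\<gamma> ! i)" for i
  have bij: "bij_betw \<phi> (Pow {..<m}) V"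
    and iff: "\<And>A B. A \<subseteq> {..<m} \<Longrightarrow> B \<subseteq> {..<m} \<Longrightarrow>
      (\<phi> A, \<phi> B) \<in> E \<longleftrightarrow> (\<exists>a\<in>{..<m}. a \<notin> A \<and> B = insert a A)"
    using cube unfolding bruhat_cube_def by auto
  have B: "B i \<subseteq> {..<m} \<and> \<phi> (B i) = \<gamma> ! i" if "i < length \<gamma>" for i
  proof -
    have "\<gamma> ! i \<in> V" using path that unfolding path_in_def by auto
    then show ?thesis
      unfolding B_def using bij_betw_inv_into_right[OF bij] inv_into_into[of _ \<phi> "Pow {..<m}"] bij
      by (auto simp: bij_betw_def)
  qed
  moreover have "\<exists>a. a \<notin> B i \<and> B (Suc i) = insert a (B i)" if "Suc i < length \<gamma>" for i
  proof -
    have "(\<gamma> ! i, \<gamma> ! Suc i) \<in> E" using path that unfolding path_in_def by blast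
    then show ?thesis
      using iff[of "B i" "B (Suc i)"] B[of i] B[of "Suc i"] that by auto
  qed
  ultimately show ?thesis using that by blast
qed

lemma bruhat_cube_path_initial_segments:
  assumes cube: "bruhat_cube n m V E \<phi>" and bot: "\<phi> {} = x" and top: "\<phi> {..<m} = y"
    and path: "bruhat_path n \<gamma> x y" "path_in \<gamma> V E"
  obtains \<psi> where "length \<gamma> = Suc m" "bruhat_cube n m V E \<psi>" "\<forall>i\<le>m. \<psi> {..<i} = \<gamma> ! i"
proof -
  define L where "L = length \<gamma>"
  obtain B where B: "\<forall>i<L. B i \<subseteq> {..<m} \<and> \<phi> (B i) = \<gamma> ! i"
    and step: "\<forall>i. Suc i < L \<longrightarrow> (\<exists>a. a \<notin> B i \<and> B (Suc i) = insert a (B i))"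
    using bruhat_cube_path_preimages[OF cube path(2)] unfolding L_def by blast
  have B_eqI: "B i = A" if "i < L" "A \<subseteq> {..<m}" "\<phi> A = \<gamma> ! i" for i A
    using inj_onD[OF bruhat_cube_inj_on[OF cube]] B that by auto
  have "L \<noteq> 0" "\<gamma> ! 0 = x" "\<gamma> ! (L - 1) = y"
    using path(1) unfolding bruhat_path_def L_def by (auto simp: hd_conv_nth last_conv_nth)
  then have "B 0 = {}" "B (L - 1) = {..<m}"
    using B_eqI bot top by auto
  moreover have "card (B (L - 1)) = L - 1"
    using insertion_chain_card[of B "L - 1"] \<open>B 0 = {}\<close> step \<open>L \<noteq> 0\<close> by auto
  ultimately have L: "L = Suc m"
    using \<open>L \<noteq> 0\<close> by simp
  obtain \<pi> where \<pi>: "bij_betw \<pi> {..<m} {..<m}" "\<forall>i\<le>m. B i = \<pi> ` {..<i}"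
    using saturated_chain_enumeration[of B m] \<open>B 0 = {}\<close> \<open>B (L - 1) = {..<m}\<close> step L by auto
  show ?thesis
  proof
    show "length \<gamma> = Suc m" using L unfolding L_def .
    show "bruhat_cube n m V E (\<lambda>S. \<phi> (\<pi> ` S))"
      by (rule bruhat_cube_relabel[OF cube \<pi>(1)])
    show "\<forall>i\<le>m. \<phi> (\<pi> ` {..<i}) = \<gamma> ! i"
      using B \<pi>(2) L by simp
  qed
qed

theorem lemma3p3:
  fixes n :: nat and x y :: "nat \<Rightarrow> nat" and \<gamma> :: "(nat \<Rightarrow> nat) list"
  assumes "x \<in> Sym n" and "y \<in> Sym n"
    and "bruhat_path n \<gamma> x y"
    and "hypercube_from_to n m1 V1 E1 x y" and "path_in \<gamma> V1 E1"
    and "hypercube_from_to n m2 V2 E2 x y" and "path_in \<gamma> V2 E2"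
  shows "V1 = V2 \<and> E1 = E2"
proof -
  obtain \<phi>1 where c1: "bruhat_cube n m1 V1 E1 \<phi>1" "\<phi>1 {} = x" "\<phi>1 {..<m1} = y"
    using assms(4) by (rule hypercube_from_toE)
  obtain \<phi>2 where c2: "bruhat_cube n m2 V2 E2 \<phi>2" "\<phi>2 {} = x" "\<phi>2 {..<m2} = y"
    using assms(6) by (rule hypercube_from_toE)
  obtain \<psi>1 where \<psi>1: "length \<gamma> = Suc m1" "bruhat_cube n m1 V1 E1 \<psi>1"
      "\<forall>i\<le>m1. \<psi>1 {..<i} = \<gamma> ! i"
    by (rule bruhat_cube_path_initial_segments[OF c1 assms(3,5)])
  obtain \<psi>2 where \<psi>2: "length \<gamma> = Suc m2" "bruhat_cube n m2 V2 E2 \<psi>2"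
      "\<forall>i\<le>m2. \<psi>2 {..<i} = \<gamma> ! i"
    by (rule bruhat_cube_path_initial_segments[OF c2 assms(3,7)])
  have "m2 = m1" using \<psi>1(1) \<psi>2(1) by simp
  note \<psi>2 = \<psi>2[unfolded \<open>m2 = m1\<close>]
  have "\<psi>1 S = \<psi>2 S" if "S \<subseteq> {..<m1}" for S
    using bruhat_cube_eq_if_eq_on_initial_segments[OF \<psi>1(2) \<psi>2(2) _ that] \<psi>1(3) \<psi>2(3) by simp
  then show ?thesis
    by (rule bruhat_cube_determined_by_param[OF \<psi>1(2) \<psi>2(2)])
qed

end
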